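(* Let $\theta\in\Theta\subseteq\mathbb{R}$ and let the data $\mathbf X\in\mathbb{R}^n$ be generated by $\mathbf X=\mathbf G(\mathbf U,\theta)$, where $\mathbf U$ is a random variable whose distribution does not depend on $\theta$. Assume there is a one-to-one $C^1$ transformation $\mathbf X\mapsto(S(\mathbf X),\mathbf A(\mathbf X))$ with $S(\mathbf X)$ real-valued and $\mathbf A(\mathbf X)$ an $(n-1)$-dimensional vector of ancillary statistics, in the sense that $\mathbf A(\mathbf G(\mathbf U,\theta))$ does not depend on $\theta$. Set $G_S(\mathbf u,\theta)=S(\mathbf G(\mathbf u,\theta))$ and $\mathbf G_{\mathbf A}(\mathbf u)=\mathbf A(\mathbf G(\mathbf u,\theta))$, so that $s=G_S(\mathbf U,\theta)$, $\mathbf a=\mathbf G_{\mathbf A}(\mathbf U)$. Let $Q_s(\mathbf u)=\{\theta: s=G_S(\mathbf u,\theta)\}$, let $\mathbf U^\star_{\mathbf a}$ have the conditional distribution of $\mathbf U$ given $\mathbf G_{\mathbf A}(\mathbf U)=\mathbf a$, and let $F_{S\mid\mathbf a}(\cdot,\theta)$ be the conditional distribution function of $S(\mathbf X)$ given $\mathbf A(\mathbf X)=\mathbf a$. Suppose (1) for every $\mathbf u$, $\theta\mapsto G_S(\mathbf u,\theta)$ is non-decreasing, and (2) for every $\mathbf u$ and $s$, $Q_s(\mathbf u)\neq\emptyset$. Then $Q_s(\mathbf u)$ is an interval with endpoints $Q^-_s(\mathbf u)\le Q^+_s(\mathbf u)$, and for any $s_0,\theta_0$, $$P\big(Q^+_{s_0}(\mathbf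 U^\star_{\mathbf a})\le\theta_0\big)=1-\lim_{\epsilon\downarrow0}F_{S\mid\mathbf a}(s_0,\theta_0+\epsilon),\qquad P\big(Q^-_{s_0}(\mathbf U^\star_{\mathbf a})\le\theta_0\big)=1-\lim_{\epsilon\downarrow0}F_{S\mid\mathbf a}(s_0-\epsilon,\theta_0).$$ If moreover (3) for all $\theta_0,s_0$, $F_{S\mid\mathbf a}(s_0,\theta_0)-\lim_{\epsilon\downarrow0}F_{S\mid\mathbf a}(s_0-\epsilon,\theta_0)=0$, then $F_{S\mid\mathbf a}(s,\theta)$ is continuous in $\theta$, $Q^+_{s_0}(\mathbf U^\star_{\mathbf a})=Q^-_{s_0}(\mathbf U^\star_{\mathbf a})$ almost surely, and $P\big(Q_{s_0}(\mathbf U^\star_{\mathbf a})\le\theta_0\big)=1-F_{S\mid\mathbf a}(s_0,\theta_0)$.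
   Context: When $P(Q_s(\mathbf U)\neq\emptyset)=1$, the generalized fiducial distribution of $\theta$ given observed $(s,\mathbf a)$ is the distribution of $Q_s(\mathbf U^\star_{\mathbf a})$. *)

theory Defs
  imports "HOL-Probability.Probability"
begin

definition is_reg_cond_distr ::
  "'a measure \<Rightarrow> 'u measure \<Rightarrow> 'b measure \<Rightarrow> ('a \<Rightarrow> 'u) \<Rightarrow> ('u \<Rightarrow> 'b) \<Rightarrow> ('b \<Rightarrow> 'u measure) \<Rightarrow> bool"
  where
  "is_reg_cond_distr M N K U GA \<kappa> \<longleftrightarrow>
     (\<forall>b\<in>space K. prob_space (\<kappa> b) \<and> sets (\<kappa> b) = sets N) \<and>
     (\<forall>B\<in>sets N. (\<lambda>b. emeasure (\<kappa> b) B) \<in> borel_measurable K) \<and>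
     (\<forall>B\<in>sets N. \<forall>C\<in>sets K.
        emeasure M {\<omega>\<in>space M. U \<omega> \<in> B \<and> GA (U \<omega>) \<in> C}
        = (\<integral>\<^sup>+ b. indicator C b * emeasure (\<kappa> b) B \<partial>(distr M K (\<lambda>\<omega>. GA (U \<omega>)))))"

text \<open>Conditional distribution function of \<open>S(X) = GS(U,\<theta>)\<close> given \<open>A(X) = a\<close>, where
  \<open>\<nu>\<close> is the conditional law of \<open>U\<close> given \<open>GA(U) = a\<close> (the law of \<open>U*_a\<close>).\<close>
definition cond_cdf :: "'u measure \<Rightarrow> ('u \<Rightarrow> real \<Rightarrow> real) \<Rightarrow> real \<Rightarrow> real \<Rightarrow> real" where
  "cond_cdf \<nu> GS s \<theta> = measure \<nu> {u\<in>space \<nu>. GS u \<theta> \<le> s}"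

definition Qset :: "('u \<Rightarrow> real \<Rightarrow> real) \<Rightarrow> real \<Rightarrow> 'u \<Rightarrow> real set" where
  "Qset GS s u = {\<theta>. s = GS u \<theta>}"

definition Qminus :: "('u \<Rightarrow> real \<Rightarrow> real) \<Rightarrow> real \<Rightarrow> 'u \<Rightarrow> real" where
  "Qminus GS s u = Inf (Qset GS s u)"

definition Qplus :: "('u \<Rightarrow> real \<Rightarrow> real) \<Rightarrow> real \<Rightarrow> 'u \<Rightarrow> real" where
  "Qplus GS s u = Sup (Qset GS s u)"

end

theory Submission
  imports Defs
begin

text \<open>For each \<open>u\<close> the map \<open>\<theta> \<mapsto> G_S(u,\<theta>)\<close> is monotone and onto the reals, hence
  continuous, so its level set \<open>Q_s(u)\<close> is the compact interval \<open>[Q-_s(u), Q+_s(u)]\<close>, and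
  \<open>G_S(u,\<theta>) \<le> s \<longleftrightarrow> \<theta> \<le> Q+_s(u)\<close>, \<open>G_S(u,\<theta>) < s \<longleftrightarrow> \<theta> < Q-_s(u)\<close>.
  So \<open>F_S|a(s,\<theta>) = P(\<theta> \<le> Q+_s(U*))\<close>, and both one-sided limits of \<open>F_S|a\<close> are probabilities
  of strict events, i.e. of events about \<open>Q+_s(U*)\<close> and \<open>Q-_s(U*)\<close>.
  If \<open>F_S|a\<close> has no jumps in \<open>s\<close>, then \<open>P(G_S(U*,\<theta>) = s) = 0\<close> for every \<open>\<theta>\<close>. This removes
  the atoms of \<open>Q+_s(U*)\<close>, making \<open>F_S|a\<close> continuous in \<open>\<theta>\<close>, and, applied to rational \<open>\<theta>\<close>,
  shows that \<open>Q_s(U*)\<close> is almost surely a single point.\<close>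

lemma continuous_on_mono_surj:
  fixes f :: "real \<Rightarrow> real"
  assumes "mono f" "surj f"
  shows "continuous_on UNIV f"
  using assms by (intro continuous_onI_mono) (auto simp: mono_def)

lemma surj_iff_Qset_nonempty: "surj (F u) \<longleftrightarrow> (\<forall>s. Qset F s u \<noteq> {})"
  by (auto simp: Qset_def surj_def)

context
  fixes F :: "'u \<Rightarrow> real \<Rightarrow> real" and u :: 'u
  assumes mono: "mono (F u)" and surj: "surj (F u)"
begin

lemma bdd_above_Qset: "bdd_above (Qset F s u)"
proof -
  obtain t where t: "F u t = s + 1" using surj by (metis surjD)
  have "\<theta> \<le> t" if "s = F u \<theta>" for \<theta>
    using monoD[OF mono, of t \<theta>] t that by linarith
  then show ?thesis unfolding Qset_def by (intro bdd_aboveI[of _ t]) auto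
qed

lemma bdd_below_Qset: "bdd_below (Qset F s u)"
proof -
  obtain t where t: "F u t = s - 1" using surj by (metis surjD)
  have "t \<le> \<theta>" if "s = F u \<theta>" for \<theta>
    using monoD[OF mono, of \<theta> t] t that by linarith
  then show ?thesis unfolding Qset_def by (intro bdd_belowI[of _ t]) auto
qed

lemma closed_Qset: "closed (Qset F s u)"
proof -
  have "closed (F u -` {s})"
    using continuous_on_mono_surj[OF mono surj]
    by (intro continuous_closed_vimage) (auto simp: continuous_on_eq_continuous_at)
  then show ?thesis by (simp add: Qset_def vimage_def eq_commute)
qed

lemma Qset_nonempty: "Qset F s u \<noteq> {}"
  using surjD[OF surj, of s] by (auto simp: Qset_def)

lemma F_Qplus: "F u (Qplus F s u) = s"
proof -
  have "Qplus F s u \<in> Qset F s u"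
    unfolding Qplus_def by (rule closed_contains_Sup[OF Qset_nonempty bdd_above_Qset closed_Qset])
  then show ?thesis by (simp add: Qset_def)
qed

lemma F_Qminus: "F u (Qminus F s u) = s"
proof -
  have "Qminus F s u \<in> Qset F s u"
    unfolding Qminus_def by (rule closed_contains_Inf[OF Qset_nonempty bdd_below_Qset closed_Qset])
  then show ?thesis by (simp add: Qset_def)
qed

lemma le_Qplus_iff: "F u \<theta> \<le> s \<longleftrightarrow> \<theta> \<le> Qplus F s u"
proof
  assume "\<theta> \<le> Qplus F s u"
  then show "F u \<theta> \<le> s" using monoD[OF mono] F_Qplus by metis
next
  assume le: "F u \<theta> \<le> s"
  show "\<theta> \<le> Qplus F s u"
  proof (rule ccontr)
    assume not_le: "\<not> \<theta> \<le> Qplus F s u"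
    then have "s \<le> F u \<theta>" using monoD[OF mono, of "Qplus F s u" \<theta>] F_Qplus by simp
    with le have "\<theta> \<in> Qset F s u" by (simp add: Qset_def)
    then have "\<theta> \<le> Qplus F s u" unfolding Qplus_def by (rule cSup_upper[OF _ bdd_above_Qset])
    with not_le show False ..
  qed
qed

lemma less_Qminus_iff: "F u \<theta> < s \<longleftrightarrow> \<theta> < Qminus F s u"
proof
  assume less: "F u \<theta> < s"
  show "\<theta> < Qminus F s u"
  proof (rule ccontr)
    assume "\<not> \<theta> < Qminus F s u"
    then have "s \<le> F u \<theta>" using monoD[OF mono, of "Qminus F s u" \<theta>] F_Qminus by simp
    with less show False by simp
  qed
next
  assume less: "\<theta> < Qminus F s u"
  then have "F u \<theta> \<le> s" using monoD[OF mono, of \<theta> "Qminus F s u"] F_Qminus by simp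
  moreover have "\<theta> \<notin> Qset F s u"
    using less cInf_lower[OF _ bdd_below_Qset, of \<theta> s] by (auto simp: Qminus_def)
  ultimately show "F u \<theta> < s" by (auto simp: Qset_def)
qed

lemma Qset_eq_atLeastAtMost: "Qset F s u = {Qminus F s u..Qplus F s u}"
proof (rule set_eqI)
  fix \<theta>
  have "\<theta> \<in> Qset F s u \<longleftrightarrow> F u \<theta> \<le> s \<and> \<not> F u \<theta> < s" by (auto simp: Qset_def)
  also have "\<dots> \<longleftrightarrow> \<theta> \<in> {Qminus F s u..Qplus F s u}"
    by (simp only: le_Qplus_iff less_Qminus_iff not_less atLeastAtMost_iff conj_commute)
  finally show "\<theta> \<in> Qset F s u \<longleftrightarrow> \<theta> \<in> {Qminus F s u..Qplus F s u}" .
qed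

lemma Qminus_le_Qplus: "Qminus F s u \<le> Qplus F s u"
  using Qset_nonempty by (simp add: Qset_eq_atLeastAtMost)

lemma Qset_subset_atMost_iff: "Qset F s u \<subseteq> {..\<theta>} \<longleftrightarrow> Qplus F s u \<le> \<theta>"
  using Qminus_le_Qplus by (auto simp: Qset_eq_atLeastAtMost)

end

lemma (in prob_space) prob_le_eq_prob_less_add_prob_eq:
  fixes X :: "'a \<Rightarrow> real"
  assumes [measurable]: "X \<in> borel_measurable M"
  shows "prob {\<omega>\<in>space M. X \<omega> \<le> x} = prob {\<omega>\<in>space M. X \<omega> < x} + prob {\<omega>\<in>space M. X \<omega> = x}"
proof -
  have "{\<omega>\<in>space M. X \<omega> \<le> x} = {\<omega>\<in>space M. X \<omega> < x} \<union> {\<omega>\<in>space M. X \<omega> = x}" by auto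
  then show ?thesis by (simp add: finite_measure_Union disjoint_iff)
qed

lemma (in prob_space) measure_distr_borel_eq_prob:
  assumes "X \<in> borel_measurable M" "A \<in> sets borel"
  shows "measure (distr M borel X) A = prob {\<omega>\<in>space M. X \<omega> \<in> A}"
  using assms by (simp add: measure_distr vimage_def Int_def conj_commute)

lemma filterlim_minus_at_right_0: "filterlim (\<lambda>\<epsilon>. x - \<epsilon>) (at_left x) (at_right (0::real))"
proof -
  have "((\<lambda>\<epsilon>. x - \<epsilon>) \<longlongrightarrow> x - 0) (at_right (0::real))"
    by (intro tendsto_intros)
  moreover have "eventually (\<lambda>\<epsilon>. x - \<epsilon> \<in> {..<x} \<and> x - \<epsilon> \<noteq> x) (at_right (0::real))"
    by (simp add: eventually_at_filter)
  ultimately show ?thesis by (simp add: filterlim_at)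
qed

lemma (in prob_space) tendsto_prob_le_minus:
  fixes X :: "'a \<Rightarrow> real"
  assumes [measurable]: "X \<in> borel_measurable M"
  shows "((\<lambda>\<epsilon>. prob {\<omega>\<in>space M. X \<omega> \<le> x - \<epsilon>}) \<longlongrightarrow> prob {\<omega>\<in>space M. X \<omega> < x}) (at_right 0)"
proof -
  interpret D: real_distribution "distr M borel X" by simp
  have "((\<lambda>\<epsilon>. cdf (distr M borel X) (x - \<epsilon>)) \<longlongrightarrow> measure (distr M borel X) {..<x}) (at_right 0)"
    by (rule filterlim_compose[OF D.cdf_at_left filterlim_minus_at_right_0])
  then show ?thesis by (simp add: cdf_def measure_distr_borel_eq_prob)
qed

text \<open>\<open>\<nu>\<close> stands for the law of \<open>U*_a\<close> and \<open>F u \<theta>\<close> for \<open>G_S(u,\<theta>)\<close>.\<close>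

locale monotone_structural_equation = prob_space \<nu> for \<nu> :: "'u measure" +
  fixes F :: "'u \<Rightarrow> real \<Rightarrow> real"
  assumes measurable_F [measurable]: "\<And>\<theta>. (\<lambda>u. F u \<theta>) \<in> borel_measurable \<nu>"
    and mono_F: "\<And>u. mono (F u)"
    and surj_F: "\<And>u. surj (F u)"
begin

lemma measurable_Qplus [measurable]: "(\<lambda>u. Qplus F s u) \<in> borel_measurable \<nu>"
proof (rule borel_measurableI_ge)
  fix \<theta>
  have "{u \<in> space \<nu>. \<theta> \<le> Qplus F s u} = {u \<in> space \<nu>. F u \<theta> \<le> s}"
    by (simp add: le_Qplus_iff[of F, OF mono_F surj_F])
  also have "\<dots> \<in> sets \<nu>" by measurable
  finally show "{u \<in> space \<nu>. \<theta> \<le> Qplus F s u} \<in> sets \<nu>" .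
qed

lemma measurable_Qminus [measurable]: "(\<lambda>u. Qminus F s u) \<in> borel_measurable \<nu>"
proof (rule borel_measurableI_greater)
  fix \<theta>
  have "{u \<in> space \<nu>. \<theta> < Qminus F s u} = {u \<in> space \<nu>. F u \<theta> < s}"
    by (simp add: less_Qminus_iff[of F, OF mono_F surj_F])
  also have "\<dots> \<in> sets \<nu>" by measurable
  finally show "{u \<in> space \<nu>. \<theta> < Qminus F s u} \<in> sets \<nu>" .
qed

lemma cond_cdf_eq_prob_le_Qplus: "cond_cdf \<nu> F s \<theta> = prob {u\<in>space \<nu>. \<theta> \<le> Qplus F s u}"
  unfolding cond_cdf_def using le_Qplus_iff[of F, OF mono_F surj_F] by simp

lemma tendsto_cond_cdf_at_right:
  "((\<lambda>\<epsilon>. cond_cdf \<nu> F s (\<theta> + \<epsilon>)) \<longlongrightarrow> 1 - prob {u\<in>space \<nu>. Qplus F s u \<le> \<theta>}) (at_right 0)"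
proof -
  \<comment> \<open>reflecting \<open>Qplus\<close> turns this right limit into the left limit of a distribution function\<close>
  have "((\<lambda>\<epsilon>. cond_cdf \<nu> F s (\<theta> + \<epsilon>)) \<longlongrightarrow> prob {u\<in>space \<nu>. \<theta> < Qplus F s u}) (at_right 0)"
    using tendsto_prob_le_minus[of "\<lambda>u. - Qplus F s u" "- \<theta>"]
    by (simp add: cond_cdf_eq_prob_le_Qplus algebra_simps)
  also have "prob {u\<in>space \<nu>. \<theta> < Qplus F s u} = 1 - prob {u\<in>space \<nu>. Qplus F s u \<le> \<theta>}"
    using prob_neg[of "\<lambda>u. Qplus F s u \<le> \<theta>"] by (simp add: not_le)
  finally show ?thesis .
qed

lemma tendsto_cond_cdf_at_left:
  "((\<lambda>\<epsilon>. cond_cdf \<nu> F (s - \<epsilon>) \<theta>) \<longlongrightarrow> prob {u\<in>space \<nu>. F u \<theta> < s}) (at_right 0)"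
  unfolding cond_cdf_def by (rule tendsto_prob_le_minus) simp

lemma prob_F_less_eq: "prob {u\<in>space \<nu>. F u \<theta> < s} = 1 - prob {u\<in>space \<nu>. Qminus F s u \<le> \<theta>}"
  using prob_neg[of "\<lambda>u. Qminus F s u \<le> \<theta>"] less_Qminus_iff[of F, OF mono_F surj_F] by (simp add: not_le)

lemma cond_cdf_jump:
  "cond_cdf \<nu> F s \<theta> - Lim (at_right 0) (\<lambda>\<epsilon>. cond_cdf \<nu> F (s - \<epsilon>) \<theta>) = prob {u\<in>space \<nu>. F u \<theta> = s}"
proof -
  have "Lim (at_right 0) (\<lambda>\<epsilon>. cond_cdf \<nu> F (s - \<epsilon>) \<theta>) = prob {u\<in>space \<nu>. F u \<theta> < s}"
    by (rule tendsto_Lim[OF _ tendsto_cond_cdf_at_left]) simp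
  moreover have "cond_cdf \<nu> F s \<theta> = prob {u\<in>space \<nu>. F u \<theta> < s} + prob {u\<in>space \<nu>. F u \<theta> = s}"
    unfolding cond_cdf_def by (rule prob_le_eq_prob_less_add_prob_eq) simp
  ultimately show ?thesis by simp
qed

context
  assumes no_atoms: "\<And>\<theta> s. prob {u\<in>space \<nu>. F u \<theta> = s} = 0"
begin

lemma prob_Qplus_eq: "prob {u\<in>space \<nu>. Qplus F s u = \<theta>} = 0"
proof -
  have "prob {u\<in>space \<nu>. Qplus F s u = \<theta>} \<le> prob {u\<in>space \<nu>. F u \<theta> = s}"
    by (rule finite_measure_mono) (auto simp: F_Qplus[of F, OF mono_F surj_F])
  then show ?thesis using no_atoms measure_nonneg by (metis antisym)
qed

lemma cond_cdf_eq_one_minus_prob_Qplus_le: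
  "cond_cdf \<nu> F s \<theta> = 1 - prob {u\<in>space \<nu>. Qplus F s u \<le> \<theta>}"
proof -
  have "cond_cdf \<nu> F s \<theta> = 1 - prob {u\<in>space \<nu>. Qplus F s u < \<theta>}"
    using prob_neg[of "\<lambda>u. Qplus F s u < \<theta>"] by (simp add: cond_cdf_eq_prob_le_Qplus not_less)
  then show ?thesis
    using prob_le_eq_prob_less_add_prob_eq[of "\<lambda>u. Qplus F s u" \<theta>] prob_Qplus_eq by simp
qed

lemma continuous_on_cond_cdf: "continuous_on UNIV (\<lambda>\<theta>. cond_cdf \<nu> F s \<theta>)"
proof -
  interpret D: real_distribution "distr \<nu> borel (\<lambda>u. Qplus F s u)" by simp
  have cdf_eq: "cdf (distr \<nu> borel (\<lambda>u. Qplus F s u)) \<theta> = prob {u\<in>space \<nu>. Qplus F s u \<le> \<theta>}" for \<theta>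
    by (simp add: cdf_def measure_distr_borel_eq_prob)
  have "isCont (cdf (distr \<nu> borel (\<lambda>u. Qplus F s u))) \<theta>" for \<theta>
    by (simp add: D.isCont_cdf measure_distr_borel_eq_prob prob_Qplus_eq)
  then have "continuous_on UNIV (\<lambda>\<theta>. 1 - cdf (distr \<nu> borel (\<lambda>u. Qplus F s u)) \<theta>)"
    by (intro continuous_at_imp_continuous_on ballI continuous_intros)
  then show ?thesis by (simp add: cdf_eq cond_cdf_eq_one_minus_prob_Qplus_le)
qed

lemma AE_Qplus_eq_Qminus: "AE u in \<nu>. Qplus F s u = Qminus F s u"
proof -
  \<comment> \<open>a nondegenerate \<open>Qset F s u\<close> contains a rational solution, and each is a null event\<close>
  have "AE u in \<nu>. F u (of_rat r) \<noteq> s" for r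
    using no_atoms[of "of_rat r" s] by (intro AE_I'[of "{u\<in>space \<nu>. F u (of_rat r) = s}"] null_setsI)
      (auto simp: emeasure_eq_measure)
  then have "AE u in \<nu>. \<forall>r. F u (of_rat r) \<noteq> s" by (simp add: AE_all_countable)
  then show ?thesis
  proof (rule AE_mp, intro AE_I2 impI)
    fix u assume no_rational_solution: "\<forall>r. F u (of_rat r) \<noteq> s"
    show "Qplus F s u = Qminus F s u"
    proof (rule ccontr)
      assume "Qplus F s u \<noteq> Qminus F s u"
      then have "Qminus F s u < Qplus F s u"
        using Qminus_le_Qplus[of F u, OF mono_F surj_F] by (metis less_eq_real_def)
      then obtain x where x: "x \<in> \<rat>" "Qminus F s u < x" "x < Qplus F s u"
        using Rats_dense_in_real by blast
      then have "x \<in> Qset F s u"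
        by (simp add: Qset_eq_atLeastAtMost[of F u, OF mono_F surj_F])
      then have "F u x = s" by (simp add: Qset_def)
      with x(1) no_rational_solution show False by (auto elim: Rats_cases)
    qed
  qed
qed

lemma prob_Qset_subset_atMost:
  "prob {u\<in>space \<nu>. Qset F s u \<subseteq> {..\<theta>}} = 1 - cond_cdf \<nu> F s \<theta>"
  by (simp add: Qset_subset_atMost_iff[of F, OF mono_F surj_F] cond_cdf_eq_one_minus_prob_Qplus_le)

end

end

theorem corollary1:
  fixes M :: "'w measure" and N :: "'u measure"
    and U :: "'w \<Rightarrow> 'u"
    and G :: "'u \<Rightarrow> real \<Rightarrow> real^'n"
    and S :: "real^'n \<Rightarrow> real" and A :: "real^'n \<Rightarrow> real^'m"
    and T' :: "real^'n \<Rightarrow> ((real^'n) \<Rightarrow>\<^sub>L (real \<times> (real^'m)))"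
    and GA :: "'u \<Rightarrow> real^'m"
    and \<kappa> :: "real^'m \<Rightarrow> 'u measure"
    and a :: "real^'m"
  assumes dim: "CARD('n) = CARD('m) + 1"
    and M: "prob_space M"
    and U: "U \<in> measurable M N"
    and G_meas: "\<And>\<theta>. (\<lambda>u. G u \<theta>) \<in> measurable N borel"
    and T_inj: "inj (\<lambda>x. (S x, A x))"
    and T_deriv: "\<And>x. ((\<lambda>x. (S x, A x)) has_derivative blinfun_apply (T' x)) (at x)"
    and T'_cont: "continuous_on UNIV T'"
    and ancillary: "\<And>u \<theta>. A (G u \<theta>) = GA u"
    and cond: "is_reg_cond_distr M N borel U GA \<kappa>"
    and mono: "\<And>u. mono (\<lambda>\<theta>. S (G u \<theta>))"
    and nonempty: "\<And>u s. Qset (\<lambda>u \<theta>. S (G u \<theta>)) s u \<noteq> {}"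
  shows
    "(\<forall>s u. is_interval (Qset (\<lambda>u \<theta>. S (G u \<theta>)) s u)
            \<and> bdd_below (Qset (\<lambda>u \<theta>. S (G u \<theta>)) s u)
            \<and> bdd_above (Qset (\<lambda>u \<theta>. S (G u \<theta>)) s u)
            \<and> Qminus (\<lambda>u \<theta>. S (G u \<theta>)) s u \<le> Qplus (\<lambda>u \<theta>. S (G u \<theta>)) s u)
     \<and> (\<forall>s0 \<theta>0.
          ((\<lambda>\<epsilon>. cond_cdf (\<kappa> a) (\<lambda>u \<theta>. S (G u \<theta>)) s0 (\<theta>0 + \<epsilon>))
             \<longlongrightarrow> 1 - measure (\<kappa> a) {u\<in>space (\<kappa> a). Qplus (\<lambda>u \<theta>. S (G u \<theta>)) s0 u \<le> \<theta>0})
            (at_right 0)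
        \<and> ((\<lambda>\<epsilon>. cond_cdf (\<kappa> a) (\<lambda>u \<theta>. S (G u \<theta>)) (s0 - \<epsilon>) \<theta>0)
             \<longlongrightarrow> 1 - measure (\<kappa> a) {u\<in>space (\<kappa> a). Qminus (\<lambda>u \<theta>. S (G u \<theta>)) s0 u \<le> \<theta>0})
            (at_right 0))
     \<and> ((\<forall>\<theta>0 s0. cond_cdf (\<kappa> a) (\<lambda>u \<theta>. S (G u \<theta>)) s0 \<theta>0
                   - Lim (at_right 0) (\<lambda>\<epsilon>. cond_cdf (\<kappa> a) (\<lambda>u \<theta>. S (G u \<theta>)) (s0 - \<epsilon>) \<theta>0) = 0)
        \<longrightarrow> (\<forall>s. continuous_on UNIV (\<lambda>\<theta>. cond_cdf (\<kappa> a) (\<lambda>u \<theta>. S (G u \<theta>)) s \<theta>))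
          \<and> (\<forall>s0. AE u in \<kappa> a. Qplus (\<lambda>u \<theta>. S (G u \<theta>)) s0 u = Qminus (\<lambda>u \<theta>. S (G u \<theta>)) s0 u)
          \<and> (\<forall>s0 \<theta>0. measure (\<kappa> a) {u\<in>space (\<kappa> a). Qset (\<lambda>u \<theta>. S (G u \<theta>)) s0 u \<subseteq> {..\<theta>0}}
                      = 1 - cond_cdf (\<kappa> a) (\<lambda>u \<theta>. S (G u \<theta>)) s0 \<theta>0))"
proof -
  \<comment> \<open>of the model only the measurability of \<open>S\<close> and \<open>prob_space (\<kappa> a)\<close> are needed\<close>
  let ?F = "\<lambda>u \<theta>. S (G u \<theta>)"
  have \<kappa>a: "prob_space (\<kappa> a)" "sets (\<kappa> a) = sets N"
    using cond by (simp_all add: is_reg_cond_distr_def)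
  have "isCont S x" for x
    using isCont_fst[OF has_derivative_continuous[OF T_deriv]] by simp
  then have "S \<in> borel_measurable borel"
    by (intro borel_measurable_continuous_onI continuous_at_imp_continuous_on) auto
  then have "(\<lambda>u. ?F u \<theta>) \<in> borel_measurable N" for \<theta>
    by (rule measurable_compose[OF G_meas])
  then have "(\<lambda>u. ?F u \<theta>) \<in> borel_measurable (\<kappa> a)" for \<theta>
    using measurable_cong_sets[OF \<kappa>a(2) refl[of "sets (borel :: real measure)"]] by simp
  moreover have surj: "surj (?F u)" for u
    using nonempty surj_iff_Qset_nonempty[of ?F u] by simp
  ultimately interpret monotone_structural_equation "\<kappa> a" ?F
    by (intro monotone_structural_equation.intro monotone_structural_equation_axioms.intro \<kappa>a(1) mono)
  show ?thesis
    unfolding cond_cdf_jump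
    using Qset_eq_atLeastAtMost[of ?F, OF mono surj] bdd_below_Qset[of ?F, OF mono surj]
      bdd_above_Qset[of ?F, OF mono surj] Qminus_le_Qplus[of ?F, OF mono surj]
      tendsto_cond_cdf_at_right tendsto_cond_cdf_at_left continuous_on_cond_cdf
      AE_Qplus_eq_Qminus prob_Qset_subset_atMost
    by (simp add: is_interval_cc prob_F_less_eq)
qed

end
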